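(* Let $n,k$ be positive integers and let $b_{\max} = \max\{b\in\mathbb{N}^* : WS^+_b(n+1) = WS^+(n+1)\}$. Then $$WS(n+k) \geq S(k)\,WS^+(n+1) + b_{\max}.$$
   Context: A set $A \subseteq \mathbb{N}$ is sum-free if for all $(a,b)\in A^2$ (allowing $a=b$), $a+b \notin A$; it is weakly sum-free if for all $(a,b)\in A^2$ with $a\neq b$, $a+b\notin A$. $S(n)$ (resp. $WS(n)$) is the largest $p$ such that $\{1,\dots,p\}$ can be partitioned into $n$ sum-free (resp. weakly sum-free) subsets. For positive integers $a>b$, let $\pi(x) = (x \bmod a) + a\cdot \mathbb{1}_{\{0,\dots,b\}}(x \bmod a)$. For positive integers $a,m,b$ with $a>b$, a partition $(A_1,\dots,A_m)$ of $\{1,\dots,a+b\}$ is a $b$-WS-template with width $a$ and $m$ colors if: (i) every $A_i$ is weakly sum-free; (ii) every $A_i\setminus\{1,\dots,b\}$ is sum-free; (iii) for all $(x,y)\in A_m^2$, $x+y>b+2a$ implies $x+y-2a\notin A_m$; (iv) for all $i\in\{1,\dots,m-1\}$ and $(x,y)\in A_i^2$, $x+y>a+b$ implies $\pi(x+y)\notin A_i$. $WS^+_b(m)$ is the largest $a$ such that a $b$-WS-template with width $a$ and $m$ colors exists ($0$ if none), and $WS^+(m)=\max_{b\in\mathbb{N}^*} WS^+_b(m)$. *)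

theory Defs
  imports Main
begin

definition sum_free :: "nat set \<Rightarrow> bool" where
  "sum_free A \<longleftrightarrow> (\<forall>x\<in>A. \<forall>y\<in>A. x + y \<notin> A)"

definition weakly_sum_free :: "nat set \<Rightarrow> bool" where
  "weakly_sum_free A \<longleftrightarrow> (\<forall>x\<in>A. \<forall>y\<in>A. x \<noteq> y \<longrightarrow> x + y \<notin> A)"

definition is_partition :: "nat \<Rightarrow> (nat \<Rightarrow> nat set) \<Rightarrow> nat set \<Rightarrow> bool" where
  "is_partition n A X \<longleftrightarrow>
     (\<Union>i\<in>{1..n}. A i) = X \<and>
     (\<forall>i\<in>{1..n}. \<forall>j\<in>{1..n}. i \<noteq> j \<longrightarrow> A i \<inter> A j = {})"

definition Schur :: "nat \<Rightarrow> nat" ("S") where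
  "S n = (GREATEST p. \<exists>A. is_partition n A {1..p} \<and> (\<forall>i\<in>{1..n}. sum_free (A i)))"

definition WS :: "nat \<Rightarrow> nat" where
  "WS n = (GREATEST p. \<exists>A. is_partition n A {1..p} \<and> (\<forall>i\<in>{1..n}. weakly_sum_free (A i)))"

definition pi_ab :: "nat \<Rightarrow> nat \<Rightarrow> nat \<Rightarrow> nat" where
  "pi_ab a b x = (x mod a) + (if x mod a \<le> b then a else 0)"

definition WS_template :: "nat \<Rightarrow> nat \<Rightarrow> nat \<Rightarrow> (nat \<Rightarrow> nat set) \<Rightarrow> bool" where
  "WS_template b a m A \<longleftrightarrow>
     0 < a \<and> 0 < b \<and> 0 < m \<and> b < a \<and>
     is_partition m A {1..a+b} \<and>
     (\<forall>i\<in>{1..m}. weakly_sum_free (A i)) \<and>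
     (\<forall>i\<in>{1..m}. sum_free (A i - {1..b})) \<and>
     (\<forall>x\<in>A m. \<forall>y\<in>A m. x + y > b + 2*a \<longrightarrow> x + y - 2*a \<notin> A m) \<and>
     (\<forall>i\<in>{1..m-1}. \<forall>x\<in>A i. \<forall>y\<in>A i. x + y > a + b \<longrightarrow> pi_ab a b (x + y) \<notin> A i)"

definition WS_plus_b :: "nat \<Rightarrow> nat \<Rightarrow> nat" where
  "WS_plus_b b m = (if \<exists>a A. WS_template b a m A
                    then (GREATEST a. \<exists>A. WS_template b a m A) else 0)"

definition WS_plus :: "nat \<Rightarrow> nat" where
  "WS_plus m = (GREATEST v. \<exists>b>0. v = WS_plus_b b m)"

end

theory Submission
  imports Defs "HOL-Library.Ramsey"
begin

(* Write every x > b uniquely as x = r + j a with b < r \<le> a + b, and let x \<le> b stand for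
   itself (r = x, j = 0); r is the residue and j the layer of x.  Given a b-WS-template
   A_1, ..., A_(n+1) of width a and a sum-free partition B_1, ..., B_k of {1..s}, colour
   x \<in> {1..s a + b} by i if r \<in> A_i with i \<le> n, and by n + t if r \<in> A_(n+1) and j + 1 \<in> B_t.
   Adding two numbers adds residues and layers, up to a carry of a or 2a into the residue:
   without carry the template itself forbids the sum, a carry of a is excluded by condition
   (iv) in the first n colours and by sum-freeness of B_t in the others, a carry of 2a by
   condition (iii).  With s = S(k), a = WS+(n+1) and b = b_max this gives WS(n+k) \<ge> s a + b.
   All suprema involved are attained because WS(m) is finite, by Ramsey's theorem. *)

definition WS_colourable :: "nat \<Rightarrow> nat \<Rightarrow> bool" where
  "WS_colourable n p \<longleftrightarrow> (\<exists>A. is_partition n A {1..p} \<and> (\<forall>i\<in>{1..n}. weakly_sum_free (A i)))"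

definition S_colourable :: "nat \<Rightarrow> nat \<Rightarrow> bool" where
  "S_colourable n p \<longleftrightarrow> (\<exists>A. is_partition n A {1..p} \<and> (\<forall>i\<in>{1..n}. sum_free (A i)))"

lemma WS_eq_Greatest: "WS n = Greatest (WS_colourable n)"
  unfolding WS_def WS_colourable_def[abs_def] ..

lemma Schur_eq_Greatest: "S n = Greatest (S_colourable n)"
  unfolding Schur_def S_colourable_def[abs_def] ..

lemma sum_free_imp_weakly_sum_free: "sum_free A \<Longrightarrow> weakly_sum_free A"
  unfolding sum_free_def weakly_sum_free_def by blast

lemma S_colourable_imp_WS_colourable: "S_colourable n p \<Longrightarrow> WS_colourable n p"
  unfolding S_colourable_def WS_colourable_def using sum_free_imp_weakly_sum_free by blast

lemma differences_of_four_not_weakly_sum_free: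
  assumes "weakly_sum_free D" "u < v" "v < w" "w < x"
    and diff: "\<And>y z. y \<in> {u, v, w, x} \<Longrightarrow> z \<in> {u, v, w, x} \<Longrightarrow> y < z \<Longrightarrow> z - y \<in> D"
  shows False
proof -
  have "v - u \<noteq> x - v \<or> w - u \<noteq> x - w" using assms(2-4) by linarith
  then obtain q where q: "q \<in> {v, w}" "q - u \<noteq> x - q" by blast
  then have "u < q" "q < x" using assms(2-4) by auto
  then have "q - u \<in> D" "x - q \<in> D" "x - u \<in> D" "(q - u) + (x - q) = x - u"
    using q(1) diff by auto
  then show False using assms(1) q(2) unfolding weakly_sum_free_def by metis
qed

lemma partition_not_weakly_sum_free:
  assumes R: "partn_lst {..<Suc p} (replicate n 4) 2" and A: "is_partition n A {1..p}"
  shows "\<exists>i\<in>{1..n}. \<not> weakly_sum_free (A i)"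
proof -
  have "\<forall>d\<in>{1..p}. \<exists>i\<in>{1..n}. d \<in> A i" using A unfolding is_partition_def by blast
  then obtain col where col: "\<And>d. d \<in> {1..p} \<Longrightarrow> col d \<in> {1..n} \<and> d \<in> A (col d)"
    by metis
  define f where "f e = col (Max e - Min e) - 1" for e :: "nat set"
  have f: "f {y, z} = col (z - y) - 1" if "y < z" for y z
    using that by (simp add: f_def max_def min_def)
  have "f \<in> [{..<Suc p}]\<^bsup>2\<^esup> \<rightarrow> {..<n}"
  proof
    fix e assume "e \<in> [{..<Suc p}]\<^bsup>2\<^esup>"
    then obtain y z where "e = {y, z}" "y < z" "z \<le> p" by (auto simp: ordered_nsets_2_eq)
    then show "f e \<in> {..<n}" using col[of "z - y"] f by force
  qed
  then obtain i K where i: "i < n" and K: "K \<in> [{..<Suc p}]\<^bsup>4\<^esup>" and mono: "f ` [K]\<^bsup>2\<^esup> \<subseteq> {i}"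
    using partn_lstE[OF R] by (metis length_replicate nth_replicate)
  then obtain u v w x where uvwx: "K = {u, v, w, x}" "u < v" "v < w" "w < x" "x \<le> p"
    by (auto simp: ordered_nsets_4_eq)
  have diffs: "z - y \<in> A (Suc i)" if "y \<in> {u, v, w, x}" "z \<in> {u, v, w, x}" "y < z" for y z
  proof -
    have "{y, z} \<in> [K]\<^bsup>2\<^esup>" using that uvwx(1) by simp
    then have "f {y, z} = i" using mono by blast
    moreover have "z - y \<in> {1..p}" using that uvwx by auto
    ultimately show ?thesis using col[of "z - y"] f[OF \<open>y < z\<close>] by auto
  qed
  have "\<not> weakly_sum_free (A (Suc i))"
    using differences_of_four_not_weakly_sum_free[OF _ uvwx(2-4) diffs] by blast
  moreover have "Suc i \<in> {1..n}" using i by simp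
  ultimately show ?thesis by blast
qed

lemma WS_colourable_bounded: "\<exists>N. \<forall>p. WS_colourable n p \<longrightarrow> p < N"
proof -
  obtain N :: nat where N: "partn_lst {..<N} (replicate n 4) 2"
    using ramsey_full by blast
  have "p < N" if p: "WS_colourable n p" for p
  proof (rule ccontr)
    assume "\<not> p < N"
    then have R: "partn_lst {..<Suc p} (replicate n 4) 2"
      using partn_lst_greater_resource[OF N] by simp
    obtain A where A: "is_partition n A {1..p}" "\<forall>i\<in>{1..n}. weakly_sum_free (A i)"
      using p unfolding WS_colourable_def by blast
    then show False using partition_not_weakly_sum_free[OF R A(1)] A(2) by blast
  qed
  then show ?thesis by blast
qed

lemma le_WS:
  assumes "WS_colourable n p"
  shows "p \<le> WS n"
proof -
  obtain N where "\<forall>p. WS_colourable n p \<longrightarrow> p < N" using WS_colourable_bounded by blast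
  then have "p \<le> Greatest (WS_colourable n)"
    using Greatest_le_nat[of "WS_colourable n" p N] assms by (meson less_imp_le)
  then show ?thesis by (simp only: WS_eq_Greatest)
qed

lemma S_colourable_bounded: "\<exists>N. \<forall>p. S_colourable n p \<longrightarrow> p \<le> N"
  using WS_colourable_bounded S_colourable_imp_WS_colourable by (meson less_imp_le)

lemma S_colourable_Schur: "S_colourable k (S k)"
proof -
  have "S_colourable k 0" unfolding S_colourable_def is_partition_def sum_free_def
    by (rule exI[of _ "\<lambda>_. {}"]) simp
  then have "S_colourable k (Greatest (S_colourable k))"
    using S_colourable_bounded GreatestI_nat by metis
  then show ?thesis by (simp only: Schur_eq_Greatest)
qed

lemma Schur_pos:
  assumes "0 < k"
  shows "0 < S k"
proof -
  have "S_colourable k 1" unfolding S_colourable_def is_partition_def sum_free_def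
    by (rule exI[of _ "\<lambda>t. if t = 1 then {1} else {}"]) (use assms in auto)
  then have "1 \<le> Greatest (S_colourable k)"
    using S_colourable_bounded Greatest_le_nat by metis
  then show ?thesis by (simp only: Schur_eq_Greatest)
qed

definition layer :: "nat \<Rightarrow> nat \<Rightarrow> nat \<Rightarrow> nat" where
  "layer a b x = (x - Suc b) div a"

definition residue :: "nat \<Rightarrow> nat \<Rightarrow> nat \<Rightarrow> nat" where
  "residue a b x = x - layer a b x * a"

lemma residue_layer_decomp: "residue a b x + layer a b x * a = x"
proof -
  have "layer a b x * a \<le> x - Suc b" unfolding layer_def by (rule div_times_less_eq_dividend)
  then show ?thesis unfolding residue_def by simp
qed

lemma residue_layer_small:
  assumes "x \<le> b"
  shows "layer a b x = 0" "residue a b x = x"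
  using assms by (simp_all add: layer_def residue_def)

lemma residue_eq_mod:
  assumes "b < x"
  shows "residue a b x = Suc b + (x - Suc b) mod a"
  using assms div_mult_mod_eq[of "x - Suc b" a] unfolding residue_def layer_def by linarith

lemma residue_le: "0 < a \<Longrightarrow> residue a b x \<le> a + b"
  by (cases "x \<le> b") (auto simp: residue_layer_small residue_eq_mod Suc_le_eq)

lemma residue_gt_iff: "b < residue a b x \<longleftrightarrow> b < x"
  by (cases "x \<le> b") (auto simp: residue_layer_small residue_eq_mod)

lemma residue_pos: "0 < x \<Longrightarrow> 0 < residue a b x"
  by (cases "x \<le> b") (auto simp: residue_layer_small residue_eq_mod)

lemma layer_residue_unique:
  assumes "b < r" "r \<le> a + b"
  shows "layer a b (r + j * a) = j" "residue a b (r + j * a) = r"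
proof -
  have "r + j * a - Suc b = (r - Suc b) + j * a" "r - Suc b < a" using assms by auto
  then show "layer a b (r + j * a) = j" unfolding layer_def by simp
  then show "residue a b (r + j * a) = r" unfolding residue_def by simp
qed

lemma residue_add_mult: "0 < a \<Longrightarrow> b < x \<Longrightarrow> residue a b (x + j * a) = residue a b x"
proof -
  assume "0 < a" "b < x"
  then have r: "b < residue a b x" "residue a b x \<le> a + b"
    by (simp_all add: residue_gt_iff residue_le)
  have "x + j * a = residue a b x + (layer a b x + j) * a"
    using residue_layer_decomp[of a b x] by (simp add: add_mult_distrib)
  then show ?thesis using layer_residue_unique(2)[OF r] by simp
qed

lemma pi_ab_eq_residue:
  assumes "b < a" "b < x"
  shows "pi_ab a b x = residue a b x"
proof (cases "x mod a \<le> b")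
  case True
  have "a \<le> x"
  proof (rule ccontr)
    assume "\<not> a \<le> x"
    then have "x mod a = x" by simp
    with True assms(2) show False by simp
  qed
  then obtain d where d: "x div a = Suc d"
    using assms(1) by (metis div_greater_zero_iff gr0_implies_Suc less_nat_zero_code not_gr_zero)
  have "x = (x mod a + a) + d * a" using mod_div_mult_eq[of x a] d by simp
  then show ?thesis
    using True assms layer_residue_unique(2)[of b "x mod a + a" a d] by (simp add: pi_ab_def)
next
  case False
  moreover have "x mod a < a" using assms(1) by simp
  ultimately show ?thesis
    using layer_residue_unique(2)[of b "x mod a" a "x div a"] by (simp add: pi_ab_def)
qed

lemma layer_less:
  assumes "0 < a" "0 < s" "x \<le> s * a + b"
  shows "layer a b x < s"
proof (cases "x \<le> b")
  case False
  with assms have "x - Suc b < s * a" by linarith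
  then show ?thesis unfolding layer_def by (simp add: less_mult_imp_div_less)
qed (use assms in \<open>simp add: residue_layer_small\<close>)

lemma add_residue_layer_decomp:
  "x + y = (residue a b x + residue a b y) + (layer a b x + layer a b y) * a"
  using residue_layer_decomp[of a b x] residue_layer_decomp[of a b y] by (simp add: add_mult_distrib)

lemma residue_layer_add:
  assumes "0 < a" "residue a b x + residue a b y \<le> a + b"
  shows "residue a b (x + y) = residue a b x + residue a b y"
    and "layer a b (x + y) = layer a b x + layer a b y"
proof -
  have "residue a b (x + y) = residue a b x + residue a b y \<and>
        layer a b (x + y) = layer a b x + layer a b y"
  proof (cases "b < residue a b x + residue a b y")
    case True
    then show ?thesis
      unfolding add_residue_layer_decomp[of x y a b] using layer_residue_unique[OF True assms(2)] by simp
  next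
    case False
    then have "x \<le> b" "y \<le> b"
      using residue_gt_iff[of b a x] residue_gt_iff[of b a y] by linarith+
    with False show ?thesis by (simp add: residue_layer_small)
  qed
  then show "residue a b (x + y) = residue a b x + residue a b y"
    and "layer a b (x + y) = layer a b x + layer a b y" by auto
qed

lemma residue_layer_add_carry:
  assumes "a + b < residue a b x + residue a b y" "residue a b x + residue a b y \<le> 2 * a + b"
  shows "residue a b (x + y) = residue a b x + residue a b y - a"
    and "layer a b (x + y) = Suc (layer a b x + layer a b y)"
proof -
  define r where "r = residue a b x + residue a b y - a"
  have r: "b < r" "r \<le> a + b" using assms by (simp_all add: r_def)
  have sum: "x + y = r + Suc (layer a b x + layer a b y) * a"
    using add_residue_layer_decomp[of x y a b] assms(1) by (simp add: r_def)
  show "residue a b (x + y) = residue a b x + residue a b y - a"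
    and "layer a b (x + y) = Suc (layer a b x + layer a b y)"
    unfolding sum layer_residue_unique[OF r] by (simp_all add: r_def)
qed

lemma residue_add_double_carry:
  assumes "b < a" "2 * a + b < residue a b x + residue a b y"
  shows "residue a b (x + y) = residue a b x + residue a b y - 2 * a"
proof -
  define r where "r = residue a b x + residue a b y - 2 * a"
  have "residue a b x \<le> a + b" "residue a b y \<le> a + b"
    using assms(1) by (simp_all add: residue_le)
  then have r: "b < r" "r \<le> a + b" using assms by (simp_all add: r_def)
  have sum: "x + y = r + (layer a b x + layer a b y + 2) * a"
    using add_residue_layer_decomp[of x y a b] assms(2) by (simp add: r_def add_mult_distrib)
  show ?thesis unfolding sum layer_residue_unique[OF r] by (simp add: r_def)
qed

lemma residue_add_eq_pi_ab:
  assumes "b < a" "a + b < residue a b x + residue a b y"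
  shows "residue a b (x + y) = pi_ab a b (residue a b x + residue a b y)"
proof -
  have "b < residue a b x + residue a b y" using assms(2) by linarith
  then show ?thesis
    unfolding add_residue_layer_decomp[of x y a b] using assms(1)
    by (simp add: residue_add_mult pi_ab_eq_residue)
qed

lemma residue_add_notin:
  assumes "0 < a" "weakly_sum_free P" "sum_free (P - {1..b})" "x \<noteq> y"
    and P: "residue a b x \<in> P" "residue a b y \<in> P"
    and no_carry: "residue a b x + residue a b y \<le> a + b"
  shows "residue a b (x + y) \<notin> P"
proof
  assume "residue a b (x + y) \<in> P"
  then have sum: "residue a b x + residue a b y \<in> P"
    using residue_layer_add(1)[OF assms(1) no_carry] by simp
  show False
  proof (cases "residue a b x = residue a b y")
    case False
    then show False using assms(2) P sum unfolding weakly_sum_free_def by blast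
  next
    case True
    have "b < residue a b x"
    proof (rule ccontr)
      assume "\<not> b < residue a b x"
      then have "x \<le> b" "y \<le> b" using True residue_gt_iff[of b a x] residue_gt_iff[of b a y] by linarith+
      then show False using True assms(4) by (simp add: residue_layer_small)
    qed
    then have "residue a b x \<in> P - {1..b}" "residue a b x + residue a b x \<in> P - {1..b}"
      using P sum True by auto
    then show False using assms(3) unfolding sum_free_def by blast
  qed
qed

lemma is_partition_vimage:
  assumes "is_partition m A Y" "f ` X \<subseteq> Y"
  shows "is_partition m (\<lambda>i. X \<inter> f -` A i) X"
  using assms unfolding is_partition_def by blast

lemma is_partition_split_last:
  assumes D: "is_partition (Suc n) D X" and E: "is_partition k E Y" and g: "g ` D (Suc n) \<subseteq> Y"
  shows "is_partition (n + k) (\<lambda>i. if i \<le> n then D i else D (Suc n) \<inter> g -` E (i - n)) X"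
  unfolding is_partition_def
proof (intro conjI ballI impI)
  show "(\<Union>i\<in>{1..n + k}. if i \<le> n then D i else D (Suc n) \<inter> g -` E (i - n)) = X"
  proof (intro equalityI subsetI)
    fix x assume "x \<in> X"
    then obtain c where c: "c \<in> {1..Suc n}" "x \<in> D c" using D unfolding is_partition_def by blast
    show "x \<in> (\<Union>i\<in>{1..n + k}. if i \<le> n then D i else D (Suc n) \<inter> g -` E (i - n))"
    proof (cases "c \<le> n")
      case False
      then have "c = Suc n" using c by simp
      moreover obtain t where "t \<in> {1..k}" "g x \<in> E t"
        using E g c \<open>c = Suc n\<close> unfolding is_partition_def by blast
      ultimately show ?thesis using c by (intro UN_I[of "n + t"]) auto
    qed (use c in auto)
  qed (use D in \<open>auto simp: is_partition_def split: if_splits\<close>)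
next
  fix i j assume ij: "i \<in> {1..n + k}" "j \<in> {1..n + k}" "i \<noteq> j"
  have DD: "D i \<inter> D j = {}" if "i \<in> {1..Suc n}" "j \<in> {1..Suc n}" "i \<noteq> j" for i j
    using D that unfolding is_partition_def by blast
  have EE: "E i \<inter> E j = {}" if "i \<in> {1..k}" "j \<in> {1..k}" "i \<noteq> j" for i j
    using E that unfolding is_partition_def by blast
  consider "i \<le> n" "j \<le> n" | "i \<le> n" "\<not> j \<le> n" | "\<not> i \<le> n" "j \<le> n" | "\<not> i \<le> n" "\<not> j \<le> n"
    by blast
  then show "(if i \<le> n then D i else D (Suc n) \<inter> g -` E (i - n)) \<inter>
             (if j \<le> n then D j else D (Suc n) \<inter> g -` E (j - n)) = {}"
  proof cases
    case 1 then show ?thesis using ij DD[of i j] by simp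
  next
    case 2 then show ?thesis using ij DD[of i "Suc n"] by auto
  next
    case 3 then show ?thesis using ij DD[of "Suc n" j] by auto
  next
    case 4
    then have "E (i - n) \<inter> E (j - n) = {}" using ij by (intro EE) auto
    with 4 show ?thesis by auto
  qed
qed

lemma WS_template_colourable: "WS_template b a m A \<Longrightarrow> WS_colourable m (a + b)"
  unfolding WS_template_def WS_colourable_def by blast

lemma WS_template_bounded: "\<exists>N. \<forall>b a A. WS_template b a m A \<longrightarrow> b < N \<and> a < N"
proof -
  obtain N where N: "\<forall>p. WS_colourable m p \<longrightarrow> p < N" using WS_colourable_bounded by blast
  have "b < N \<and> a < N" if "WS_template b a m A" for b a A
  proof -
    have "a + b < N" using N WS_template_colourable[OF that] by blast
    then show ?thesis by linarith
  qed
  then show ?thesis by blast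
qed

lemma WS_plus_b_ge:
  assumes T: "WS_template b a m A"
  shows "a \<le> WS_plus_b b m"
proof -
  obtain N where "\<forall>b a A. WS_template b a m A \<longrightarrow> b < N \<and> a < N" using WS_template_bounded by blast
  then have "a \<le> (GREATEST a. \<exists>A. WS_template b a m A)"
    using T Greatest_le_nat[of "\<lambda>a. \<exists>A. WS_template b a m A" a N] by (meson less_imp_le)
  then show ?thesis using T unfolding WS_plus_b_def by auto
qed

lemma WS_plus_b_attained:
  assumes "0 < WS_plus_b b m"
  shows "\<exists>A. WS_template b (WS_plus_b b m) m A"
proof -
  have ex: "\<exists>a A. WS_template b a m A" using assms unfolding WS_plus_b_def by (auto split: if_splits)
  then obtain a0 where a0: "\<exists>A. WS_template b a0 m A" by blast
  obtain N where "\<forall>b a A. WS_template b a m A \<longrightarrow> b < N \<and> a < N" using WS_template_bounded by blast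
  then have "\<exists>A. WS_template b (GREATEST a. \<exists>A. WS_template b a m A) m A"
    using a0 GreatestI_nat[of "\<lambda>a. \<exists>A. WS_template b a m A" a0 N] by (meson less_imp_le)
  then show ?thesis using ex unfolding WS_plus_b_def by simp
qed

lemma WS_plus_b_bounded: "\<exists>N. \<forall>b. WS_plus_b b m \<le> N \<and> (0 < WS_plus_b b m \<longrightarrow> b \<le> N)"
proof -
  obtain N where N: "\<forall>b a A. WS_template b a m A \<longrightarrow> b < N \<and> a < N" using WS_template_bounded by blast
  have "WS_plus_b b m \<le> N \<and> (0 < WS_plus_b b m \<longrightarrow> b \<le> N)" for b
    using WS_plus_b_attained[of b m] N by (cases "WS_plus_b b m = 0") (auto simp: less_imp_le)
  then show ?thesis by blast
qed

lemma WS_plus_attained: "\<exists>b>0. WS_plus m = WS_plus_b b m"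
proof -
  obtain N where "\<forall>b. WS_plus_b b m \<le> N" using WS_plus_b_bounded by blast
  then have "\<exists>b>0. Greatest (\<lambda>v. \<exists>b>0. v = WS_plus_b b m) = WS_plus_b b m"
    using GreatestI_nat[of "\<lambda>v. \<exists>b>0. v = WS_plus_b b m" "WS_plus_b 1 m" N] by blast
  then show ?thesis unfolding WS_plus_def by simp
qed

lemma WS_plus_b_le_WS_plus:
  assumes "0 < b"
  shows "WS_plus_b b m \<le> WS_plus m"
proof -
  obtain N where "\<forall>b. WS_plus_b b m \<le> N" using WS_plus_b_bounded by blast
  then show ?thesis
    unfolding WS_plus_def using assms Greatest_le_nat[of "\<lambda>v. \<exists>b>0. v = WS_plus_b b m" _ N] by blast
qed

lemma WS_template_width_two:
  assumes "0 < n"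
  shows "WS_template 1 2 (n + 1) (\<lambda>i. if i = n + 1 then {1, 2} else if i = 1 then {3} else {})"
  using assms unfolding WS_template_def is_partition_def weakly_sum_free_def sum_free_def pi_ab_def
  by (auto split: if_splits)

lemma WS_plus_pos:
  assumes "0 < n"
  shows "0 < WS_plus (n + 1)"
proof -
  have "2 \<le> WS_plus_b 1 (n + 1)" by (rule WS_plus_b_ge[OF WS_template_width_two[OF assms]])
  also have "\<dots> \<le> WS_plus (n + 1)" by (rule WS_plus_b_le_WS_plus) simp
  finally show ?thesis by simp
qed

lemma WS_template_b_max:
  assumes "0 < WS_plus m"
  shows "\<exists>A. WS_template (GREATEST b. 0 < b \<and> WS_plus_b b m = WS_plus m) (WS_plus m) m A"
proof -
  let ?P = "\<lambda>b. 0 < b \<and> WS_plus_b b m = WS_plus m"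
  obtain b0 where b0: "?P b0" using WS_plus_attained by metis
  obtain N where N: "\<forall>b. WS_plus_b b m \<le> N \<and> (0 < WS_plus_b b m \<longrightarrow> b \<le> N)"
    using WS_plus_b_bounded by blast
  have "b \<le> N" if "?P b" for b
    using that N assms by auto
  then have "?P (Greatest ?P)" by (rule GreatestI_nat[of ?P, OF b0])
  then show ?thesis using WS_plus_b_attained[of "Greatest ?P" m] assms by auto
qed

locale template_lifting =
  fixes a b n :: nat and A :: "nat \<Rightarrow> nat set" and k s :: nat and B :: "nat \<Rightarrow> nat set"
  assumes template: "WS_template b a (n + 1) A"
    and Schur_partition: "is_partition k B {1..s}"
    and Schur_sum_free: "\<And>t. t \<in> {1..k} \<Longrightarrow> sum_free (B t)"
    and s_pos: "0 < s"
begin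

lemma a_pos: "0 < a" and b_less_a: "b < a"
  and A_partition: "is_partition (Suc n) A {1..a + b}"
  and A_weakly_sum_free: "i \<in> {1..Suc n} \<Longrightarrow> weakly_sum_free (A i)"
  and A_sum_free_above: "i \<in> {1..Suc n} \<Longrightarrow> sum_free (A i - {1..b})"
  and A_last: "x \<in> A (Suc n) \<Longrightarrow> y \<in> A (Suc n) \<Longrightarrow> b + 2 * a < x + y \<Longrightarrow> x + y - 2 * a \<notin> A (Suc n)"
  and A_low: "i \<in> {1..n} \<Longrightarrow> x \<in> A i \<Longrightarrow> y \<in> A i \<Longrightarrow> a + b < x + y \<Longrightarrow> pi_ab a b (x + y) \<notin> A i"
  using template unfolding WS_template_def by auto

definition lifted :: "nat \<Rightarrow> nat set" where
  "lifted = (\<lambda>i. if i \<le> n then {1..s * a + b} \<inter> residue a b -` A i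
                else {1..s * a + b} \<inter> residue a b -` A (Suc n) \<inter> (\<lambda>x. Suc (layer a b x)) -` B (i - n))"

lemma lifted_partition: "is_partition (n + k) lifted {1..s * a + b}"
proof -
  have "residue a b ` {1..s * a + b} \<subseteq> {1..a + b}"
    using a_pos by (auto simp: residue_le Suc_le_eq residue_pos)
  moreover have "(\<lambda>x. Suc (layer a b x)) ` ({1..s * a + b} \<inter> residue a b -` A (Suc n)) \<subseteq> {1..s}"
    using layer_less[OF a_pos s_pos] by (auto simp: Suc_le_eq)
  ultimately show ?thesis
    unfolding lifted_def
    by (rule is_partition_split_last[OF is_partition_vimage[OF A_partition] Schur_partition])
qed

lemma lifted_low_weakly_sum_free:
  assumes i: "i \<in> {1..n}"
  shows "weakly_sum_free (lifted i)"
  unfolding weakly_sum_free_def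
proof (intro ballI impI notI)
  fix x y assume "x \<in> lifted i" "y \<in> lifted i" "x \<noteq> y" "x + y \<in> lifted i"
  then have r: "residue a b x \<in> A i" "residue a b y \<in> A i" "residue a b (x + y) \<in> A i"
    using i by (auto simp: lifted_def)
  show False
  proof (cases "residue a b x + residue a b y \<le> a + b")
    case True
    then show False
      using residue_add_notin[OF a_pos _ _ \<open>x \<noteq> y\<close> r(1,2)] r(3) i
        A_weakly_sum_free A_sum_free_above by auto
  next
    case False
    then show False
      using residue_add_eq_pi_ab[OF b_less_a] A_low[OF i r(1,2)] r(3) by auto
  qed
qed

lemma lifted_high_weakly_sum_free:
  assumes t: "t \<in> {1..k}"
  shows "weakly_sum_free (lifted (n + t))"
  unfolding weakly_sum_free_def
proof (intro ballI impI notI)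
  fix x y assume "x \<in> lifted (n + t)" "y \<in> lifted (n + t)" "x \<noteq> y" "x + y \<in> lifted (n + t)"
  then have r: "residue a b x \<in> A (Suc n)" "residue a b y \<in> A (Suc n)" "residue a b (x + y) \<in> A (Suc n)"
    and l: "Suc (layer a b x) \<in> B t" "Suc (layer a b y) \<in> B t" "Suc (layer a b (x + y)) \<in> B t"
    using t by (auto simp: lifted_def)
  consider (no_carry) "residue a b x + residue a b y \<le> a + b"
    | (carry) "a + b < residue a b x + residue a b y" "residue a b x + residue a b y \<le> 2 * a + b"
    | (double_carry) "2 * a + b < residue a b x + residue a b y"
    by linarith
  then show False
  proof cases
    case no_carry
    then show False
      using residue_add_notin[OF a_pos _ _ \<open>x \<noteq> y\<close> r(1,2)] r(3)
        A_weakly_sum_free A_sum_free_above by auto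
  next
    case carry
    then have "Suc (layer a b (x + y)) = Suc (layer a b x) + Suc (layer a b y)"
      using residue_layer_add_carry(2) by simp
    moreover have "Suc (layer a b x) + Suc (layer a b y) \<notin> B t"
      using Schur_sum_free[OF t] l(1,2) unfolding sum_free_def by blast
    ultimately show False using l(3) by simp
  next
    case double_carry
    then show False
      using residue_add_double_carry[OF b_less_a] A_last[OF r(1,2)] r(3) by auto
  qed
qed

lemma lifted_weakly_sum_free:
  assumes "i \<in> {1..n + k}"
  shows "weakly_sum_free (lifted i)"
proof (cases "i \<le> n")
  case False
  then have "i = n + (i - n)" "i - n \<in> {1..k}" using assms by auto
  then show ?thesis using lifted_high_weakly_sum_free by metis
qed (use assms lifted_low_weakly_sum_free in auto)

lemma lifted_WS_colourable: "WS_colourable (n + k) (s * a + b)"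
  unfolding WS_colourable_def using lifted_partition lifted_weakly_sum_free by blast

end

theorem corollary3p18:
  fixes n k :: nat
  assumes "0 < n" and "0 < k"
  shows "WS (n + k) \<ge>
           S k * WS_plus (n + 1) + (GREATEST b. 0 < b \<and> WS_plus_b b (n + 1) = WS_plus (n + 1))"
proof -
  define W where "W = WS_plus (n + 1)"
  define b_max where "b_max = (GREATEST b. 0 < b \<and> WS_plus_b b (n + 1) = W)"
  obtain A where A: "WS_template b_max W (n + 1) A"
    using WS_template_b_max[OF WS_plus_pos[OF assms(1)]] unfolding W_def b_max_def by blast
  obtain B where B: "is_partition k B {1..S k}" "\<forall>t\<in>{1..k}. sum_free (B t)"
    using S_colourable_Schur unfolding S_colourable_def by blast
  interpret template_lifting W b_max n A k "S k" B
    using A B Schur_pos[OF assms(2)] by unfold_locales auto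
  have "S k * W + b_max \<le> WS (n + k)" by (rule le_WS[OF lifted_WS_colourable])
  then show ?thesis unfolding W_def b_max_def .
qed

end
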